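(* Let $\mathcal{C}$ be a fixed finite catalogue of contents with normalized popularities $\hat\nu_c>0$, $\sum_{c\in\mathcal{C}}\hat\nu_c=1$, let $M\ge 1$ and $U\ge 1$ be integers with $M\le|\mathcal{C}|$, and let $\rho>0$ be fixed. For each subset $j\subseteq\mathcal{C}$ with $|j|=M$ put $$m_j=\frac{1}{Z}\prod_{c\in j}\hat\nu_c,\qquad Z=\sum_{j'\subseteq\mathcal{C},\,|j'|=M}\ \prod_{c\in j'}\hat\nu_c .$$ For each integer $B\ge1$ consider the loss network in which calls of type $c\in\mathcal{C}$ arrive according to independent Poisson processes of rate $\nu_c^{(B)}=\rho U\hat\nu_c B$, each accepted call stays in the system for an independent exponential time of mean $1$, and for every nonempty $\mathcal{S}\subseteq\mathcal{C}$ there is a constraint ("virtual link") of capacity $$W^{(B)}_{\mathcal{S}}=U B\sum_{j\subseteq\mathcal{C},\,|j|=M,\ j\cap\mathcal{S}\neq\emptyset} m_j ;$$ an arriving call of type $c$ is accepted if and only if, after adding it, the vector $\mathbf{n}=(n_c)_{c\in\mathcal{C}}$ of numbers of calls in progress satisfies $\sum_{c\in\mathcal{S}}n_c\le W^{(B)}_{\mathcal{S}}$ for every $\mathcal{S}\subseteq\mathcal{C}$, and is lost otherwise. Let $A^{(B)}_c$ denote the stationary probability that an arriving call of type $c$ is accepted. Then for every $c\in\mathcal{C}$, $$\lim_{B\to\infty}A^{(B)}_c=\min\{1,1/\rho\}.$$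
   Context: Interpretation: $B$ boxes each cache a set of $M$ distinct contents and can serve at most $U$ concurrent unit-rate streams; $m_j$ is the fraction of boxes caching the set $j$ (the "proportional-to-product" placement). By Hall's theorem, a vector of ongoing requests $\mathbf{n}$ can be assigned to boxes holding the requested contents, respecting the upload limit $U$ per box, iff $\sum_{c\in\mathcal{S}}n_c\le U\,|\{b:\mathcal{S}\cap\mathcal{J}_b\neq\emptyset\}|$ for all $\mathcal{S}\subseteq\mathcal{C}$ ($\mathcal{J}_b$ the cache of box $b$); the capacities $W^{(B)}_{\mathcal{S}}$ are the large-$B$ values of these right-hand sides. The system load is $\rho=\sum_c\nu^{(B)}_c/(BU)$. *)

theory Defs
  imports "HOL-Analysis.Analysis"
begin

definition placement_Z :: "'a set \<Rightarrow> ('a \<Rightarrow> real) \<Rightarrow> nat \<Rightarrow> real" where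
  "placement_Z C nuh M = (\<Sum>j' \<in> {j. j \<subseteq> C \<and> card j = M}. \<Prod>c\<in>j'. nuh c)"

definition placement_m :: "'a set \<Rightarrow> ('a \<Rightarrow> real) \<Rightarrow> nat \<Rightarrow> 'a set \<Rightarrow> real" where
  "placement_m C nuh M j = (\<Prod>c\<in>j. nuh c) / placement_Z C nuh M"

definition link_cap :: "'a set \<Rightarrow> ('a \<Rightarrow> real) \<Rightarrow> nat \<Rightarrow> nat \<Rightarrow> nat \<Rightarrow> 'a set \<Rightarrow> real" where
  "link_cap C nuh M U B S =
     real U * real B * (\<Sum>j \<in> {j. j \<subseteq> C \<and> card j = M \<and> j \<inter> S \<noteq> {}}. placement_m C nuh M j)"

definition arr_rate :: "('a \<Rightarrow> real) \<Rightarrow> nat \<Rightarrow> real \<Rightarrow> nat \<Rightarrow> 'a \<Rightarrow> real" where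
  "arr_rate nuh U \<rho> B c = \<rho> * real U * nuh c * real B"

definition feasible :: "'a set \<Rightarrow> ('a \<Rightarrow> real) \<Rightarrow> nat \<Rightarrow> nat \<Rightarrow> nat \<Rightarrow> ('a \<Rightarrow> nat) set" where
  "feasible C nuh M U B =
     {n. (\<forall>c. c \<notin> C \<longrightarrow> n c = 0) \<and>
         (\<forall>S. S \<subseteq> C \<longrightarrow> real (\<Sum>c\<in>S. n c) \<le> link_cap C nuh M U B S)}"

text \<open>Stationary distribution of the loss-network Markov chain: a probability vector on the
  feasible states satisfying the global balance equations of the generator
  (arrival of type c at rate arr_rate if the new state is feasible, otherwise lost;
   each call in progress departs at rate 1).\<close>
definition stationary ::
  "'a set \<Rightarrow> ('a \<Rightarrow> real) \<Rightarrow> nat \<Rightarrow> nat \<Rightarrow> real \<Rightarrow> nat \<Rightarrow> (('a \<Rightarrow> nat) \<Rightarrow> real) \<Rightarrow> bool" where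
  "stationary C nuh M U \<rho> B \<pi> \<longleftrightarrow>
     (let F = feasible C nuh M U B; \<nu> = arr_rate nuh U \<rho> B in
       (\<forall>n. \<pi> n \<ge> 0) \<and> (\<forall>n. n \<notin> F \<longrightarrow> \<pi> n = 0) \<and> (\<Sum>n\<in>F. \<pi> n) = 1 \<and>
       (\<forall>n\<in>F.
          \<pi> n * ((\<Sum>c\<in>C. if n(c := n c + 1) \<in> F then \<nu> c else 0) + (\<Sum>c\<in>C. real (n c)))
          = (\<Sum>c\<in>C. if 0 < n c \<and> n(c := n c - 1) \<in> F then \<nu> c * \<pi> (n(c := n c - 1)) else 0)
            + (\<Sum>c\<in>C. if n(c := n c + 1) \<in> F
                        then real (n c + 1) * \<pi> (n(c := n c + 1)) else 0)))"

text \<open>Stationary acceptance probability of a type-c call (by PASTA: stationary probability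
  that the state allows one more type-c call).\<close>
definition accept_prob :: "'a set \<Rightarrow> ('a \<Rightarrow> real) \<Rightarrow> nat \<Rightarrow> nat \<Rightarrow> real \<Rightarrow> nat \<Rightarrow> 'a \<Rightarrow> real" where
  "accept_prob C nuh M U \<rho> B c =
     (let F = feasible C nuh M U B; \<pi> = (THE \<pi>. stationary C nuh M U \<rho> B \<pi>) in
       \<Sum>n\<in>{n\<in>F. n(c := n c + 1) \<in> F}. \<pi> n)"

end

theory Submission
  imports Defs "HOL-Real_Asymp.Real_Asymp"
begin

text \<open>
  The state space of the network is coordinate-convex, so its stationary law is the truncated
  product form \<open>\<pi> n \<propto> (\<Prod>c. \<nu> c ^ n c / fact (n c))\<close>; it is the only one, because the
  ratio of any stationary law to the product form is harmonic for the generator and hence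
  constant by a maximum principle. Rate conservation gives \<open>\<nu> c * A c = E (n c)\<close>.

  Lower bound: the proportional-to-product placement gives \<open>W S \<ge> U B (\<Sum>c\<in>S. nuh c)\<close>, an
  inequality between elementary symmetric sums, so the fluid state
  \<open>n c = \<lfloor>min \<rho> 1 * U B nuh c\<rfloor>\<close> is feasible. Comparing with it by Stirling-type bounds, the
  states with \<open>n c \<le> \<theta> * min \<rho> 1 * U B nuh c\<close>, \<open>\<theta> < 1\<close>, carry probability at most a
  polynomial in \<open>B\<close> times \<open>exp (- \<eta> B)\<close>, hence \<open>liminf A c \<ge> min 1 (1 / \<rho>)\<close>.

  Upper bound: the total occupancy is at most \<open>U B\<close>, i.e. \<open>(\<Sum>d\<in>C. nuh d * A d) \<le> 1 / \<rho>\<close>;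
  together with the lower bounds for the other types this forces \<open>limsup A c \<le> min 1 (1 / \<rho>)\<close>.
\<close>

lemma ln_diff_le_div:
  fixes a s :: real
  assumes "0 < s" and "0 < a"
  shows "ln a - ln s \<le> (a - s) / s"
proof -
  have "ln a - ln s = ln (a / s)" using assms by (simp add: ln_div)
  also have "\<dots> \<le> a / s - 1" using assms by (intro ln_le_minus_one) auto
  finally show ?thesis using assms by (simp add: diff_divide_distrib)
qed

lemma ln_fact_ge: "real k * ln (real k) - real k \<le> ln (fact k :: real)"
proof (induction k)
  case (Suc k)
  show ?case
  proof (cases "k = 0")
    case False
    have "ln (real k + 1) - ln (real k) \<le> 1 / real k"
      using ln_diff_le_div[of "real k" "real k + 1"] False by simp
    then have "real k * ln (real k + 1) \<le> real k * ln (real k) + 1"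
      using False by (simp add: field_simps)
    moreover have "ln (fact (Suc k) :: real) = ln (real k + 1) + ln (fact k)"
      by (simp add: ln_mult add.commute)
    ultimately show ?thesis using Suc.IH by (simp add: algebra_simps)
  qed simp
qed simp

lemma ln_fact_le: "1 \<le> k \<Longrightarrow> ln (fact k :: real) \<le> (real k + 1) * ln (real k) - real k + 1"
proof (induction k rule: dec_induct)
  case (step k)
  have "ln (real k) - ln (real k + 1) \<le> - 1 / (real k + 1)"
    using ln_diff_le_div[of "real k + 1" "real k"] step.hyps by simp
  then have "(real k + 1) * ln (real k) + 1 \<le> (real k + 1) * ln (real k + 1)"
    by (simp add: field_simps)
  moreover have "ln (fact (Suc k) :: real) = ln (real k + 1) + ln (fact k)"
    by (simp add: ln_mult add.commute)
  ultimately show ?case using step.IH by (simp add: algebra_simps)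
qed simp

text \<open>\<open>t ln (t/s) - t + s\<close>, the Poisson large-deviation rate, written so that \<open>t = 0\<close> is covered
  (via \<open>ln 0 = 0\<close>).\<close>
definition entropy_gap :: "real \<Rightarrow> real \<Rightarrow> real" where
  "entropy_gap t s = t * ln t - t * ln s - t + s"

lemma entropy_gap_ge_sqrt:
  fixes t s :: real
  assumes "0 \<le> t" and "0 < s"
  shows "(sqrt s - sqrt t)\<^sup>2 \<le> entropy_gap t s"
proof (cases "t = 0")
  case False
  then have t: "0 < t" using assms by simp
  have "ln (sqrt s) - ln (sqrt t) \<le> (sqrt s - sqrt t) / sqrt t"
    using t assms by (intro ln_diff_le_div) auto
  then have "ln s - ln t \<le> 2 * (sqrt s - sqrt t) / sqrt t"
    using t assms by (simp add: ln_sqrt field_simps)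
  then have "t * (ln s - ln t) \<le> t * (2 * (sqrt s - sqrt t) / sqrt t)"
    using t by (intro mult_left_mono) auto
  also have "\<dots> = 2 * sqrt s * sqrt t - 2 * t"
    using t by (simp add: field_simps)
  finally show ?thesis using t assms by (simp add: entropy_gap_def power2_diff algebra_simps)
qed (use assms in \<open>simp add: entropy_gap_def power2_eq_square\<close>)

lemma entropy_gap_ge_of_le:
  assumes t: "0 \<le> t" "t \<le> q * s" and q: "0 \<le> q" "q \<le> 1" and s: "0 < s"
  shows "(1 - sqrt q)\<^sup>2 * s \<le> entropy_gap t s"
proof -
  have "sqrt t \<le> sqrt q * sqrt s" using t by (simp add: real_sqrt_mult[symmetric])
  then have "(1 - sqrt q) * sqrt s \<le> sqrt s - sqrt t" by (simp add: algebra_simps)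
  moreover have "0 \<le> (1 - sqrt q) * sqrt s" using q s by simp
  ultimately have "((1 - sqrt q) * sqrt s)\<^sup>2 \<le> (sqrt s - sqrt t)\<^sup>2" by (rule power_mono)
  then show ?thesis
    using entropy_gap_ge_sqrt[OF t(1) s] s by (simp add: power_mult_distrib)
qed

lemma tendsto_from_bounds_at_left:
  fixes f :: "'b \<Rightarrow> real" and lo hi :: "real \<Rightarrow> real"
  assumes "(lo \<longlongrightarrow> L) (at_left 1)" and "(hi \<longlongrightarrow> L) (at_left 1)"
    and "\<And>\<theta>. \<theta> < 1 \<Longrightarrow> eventually (\<lambda>x. lo \<theta> \<le> f x \<and> f x \<le> hi \<theta>) F"
  shows "(f \<longlongrightarrow> L) F"
proof (rule order_tendstoI)
  fix a assume "a < L"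
  have "eventually (\<lambda>\<theta>. a < lo \<theta> \<and> \<theta> \<in> {0<..<1}) (at_left (1::real))"
    using assms(1) \<open>a < L\<close> by (intro eventually_conj order_tendstoD(1) eventually_at_left_real) auto
  then obtain \<theta> where "a < lo \<theta>" "\<theta> < 1" using eventually_happens' by force
  then show "eventually (\<lambda>x. a < f x) F"
    by (auto elim: eventually_mono[OF assms(3)])
next
  fix a assume "L < a"
  have "eventually (\<lambda>\<theta>. hi \<theta> < a \<and> \<theta> \<in> {0<..<1}) (at_left (1::real))"
    using assms(2) \<open>L < a\<close> by (intro eventually_conj order_tendstoD(2) eventually_at_left_real) auto
  then obtain \<theta> where "hi \<theta> < a" "\<theta> < 1" using eventually_happens' by force
  then show "eventually (\<lambda>x. f x < a) F"
    by (auto elim: eventually_mono[OF assms(3)])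
qed

section \<open>Elementary symmetric sums and the placement\<close>

definition elem_sym :: "('a \<Rightarrow> real) \<Rightarrow> nat \<Rightarrow> 'a set \<Rightarrow> real" where
  "elem_sym f k T = (\<Sum>j\<in>{j. j \<subseteq> T \<and> card j = k}. \<Prod>c\<in>j. f c)"

lemma finite_subsets_with: "finite T \<Longrightarrow> finite {j. j \<subseteq> T \<and> P j}"
  by (rule finite_subset[of _ "Pow T"]) auto

lemma elem_sym_le_sum_mult:
  assumes T: "finite T" and f: "\<forall>x\<in>T. 0 \<le> f x" and k: "1 \<le> k"
  shows "elem_sym f k T \<le> sum f T * elem_sym f (k - 1) T"
proof -
  define P where "P = {(c, j). c \<in> T \<and> j \<subseteq> T \<and> card j = k - 1 \<and> c \<notin> j}"
  define J where "J = {j. j \<subseteq> T \<and> card j = k - 1}"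
  have PJ: "P \<subseteq> T \<times> J" by (auto simp: P_def J_def)
  have fin: "finite J" "finite P"
    using T finite_subsets_with[OF T] finite_subset[OF PJ] by (auto simp: J_def)
  have prod_nonneg: "0 \<le> prod f j" if "j \<subseteq> T" for j
    using f that by (intro prod_nonneg) auto
  have "{j. j \<subseteq> T \<and> card j = k} = (\<lambda>(c, j). insert c j) ` P"
  proof (intro equalityI subsetI)
    fix j assume j: "j \<in> {j. j \<subseteq> T \<and> card j = k}"
    with k obtain c where "c \<in> j" by fastforce
    with j T show "j \<in> (\<lambda>(c, j). insert c j) ` P"
      by (intro image_eqI[of _ _ "(c, j - {c})"]) (auto simp: P_def finite_subset)
  qed (use T k in \<open>auto simp: P_def finite_subset\<close>)
  then have "elem_sym f k T = sum (prod f) ((\<lambda>(c, j). insert c j) ` P)"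
    by (simp add: elem_sym_def)
  also have "\<dots> \<le> sum (prod f \<circ> (\<lambda>(c, j). insert c j)) P"
    using fin prod_nonneg by (intro sum_image_le) (auto simp: P_def)
  also have "\<dots> = (\<Sum>(c, j)\<in>P. f c * prod f j)"
    using T by (intro sum.cong) (auto simp: P_def finite_subset)
  also have "\<dots> \<le> (\<Sum>(c, j)\<in>T \<times> J. f c * prod f j)"
    using T fin PJ f prod_nonneg by (intro sum_mono2) (auto simp: J_def)
  also have "\<dots> = sum f T * elem_sym f (k - 1) T"
    by (simp add: elem_sym_def J_def sum_product sum.cartesian_product)
  finally show ?thesis .
qed

lemma sum_mult_elem_sym_le_meeting:
  assumes C: "finite C" and S: "S \<subseteq> C" and f: "\<forall>x\<in>C. 0 \<le> f x" and k: "1 \<le> k"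
  shows "sum f S * elem_sym f (k - 1) (C - S)
    \<le> (\<Sum>j\<in>{j. j \<subseteq> C \<and> card j = k \<and> j \<inter> S \<noteq> {}}. \<Prod>c\<in>j. f c)"
proof -
  define J where "J = {j. j \<subseteq> C - S \<and> card j = k - 1}"
  define ins where "ins = (\<lambda>(c::'a, j). insert c j)"
  have inj: "inj_on ins (S \<times> J)"
  proof (rule inj_onI)
    fix x y assume mem: "x \<in> S \<times> J" "y \<in> S \<times> J" and eq: "ins x = ins y"
    obtain c j c' j' where xy: "x = (c, j)" "y = (c', j')" by force
    with mem have "insert c j \<inter> S = {c}" "j = insert c j - S"
      "insert c' j' \<inter> S = {c'}" "j' = insert c' j' - S" by (auto simp: J_def)
    moreover have "insert c j = insert c' j'" using eq xy by (simp add: ins_def)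
    ultimately show "x = y" using xy by (metis singleton_inject)
  qed
  have fresh: "finite j \<and> c \<notin> j" if "c \<in> S" "j \<in> J" for c j
  proof -
    have "j \<subseteq> C" "c \<notin> j" using that by (auto simp: J_def)
    then show ?thesis using finite_subset[OF _ C] by blast
  qed
  have img: "ins ` (S \<times> J) \<subseteq> {j. j \<subseteq> C \<and> card j = k \<and> j \<inter> S \<noteq> {}}"
  proof clarify
    fix c j assume "c \<in> S" "j \<in> J"
    with fresh[OF this] S k show "ins (c, j) \<subseteq> C \<and> card (ins (c, j)) = k \<and> ins (c, j) \<inter> S \<noteq> {}"
      by (auto simp: ins_def J_def)
  qed
  have "sum f S * elem_sym f (k - 1) (C - S) = (\<Sum>(c, j)\<in>S \<times> J. f c * prod f j)"
    by (simp add: elem_sym_def J_def sum_product sum.cartesian_product)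
  also have "\<dots> = (\<Sum>x\<in>S \<times> J. prod f (ins x))"
    using fresh by (intro sum.cong) (auto simp: ins_def)
  also have "\<dots> = sum (prod f) (ins ` (S \<times> J))"
    by (simp add: sum.reindex[OF inj])
  also have "\<dots> \<le> (\<Sum>j\<in>{j. j \<subseteq> C \<and> card j = k \<and> j \<inter> S \<noteq> {}}. prod f j)"
  proof (rule sum_mono2[OF finite_subsets_with[OF C] img])
    show "0 \<le> prod f j" if "j \<in> {j. j \<subseteq> C \<and> card j = k \<and> j \<inter> S \<noteq> {}} - ins ` (S \<times> J)" for j
      using that f by (intro prod_nonneg) auto
  qed
  finally show ?thesis .
qed

lemma placement_Z_pos:
  assumes "finite C" and "\<forall>x\<in>C. 0 < nuh x" and "M \<le> card C"
  shows "0 < placement_Z C nuh M"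
proof -
  obtain j where j: "j \<subseteq> C" "card j = M" using obtain_subset_with_card_n[OF assms(3)] by blast
  have "0 < prod nuh j" using j assms(2) by (intro prod_pos) auto
  also have "\<dots> \<le> placement_Z C nuh M" unfolding placement_Z_def
    using j assms by (intro member_le_sum finite_subsets_with prod_nonneg) (auto intro: less_imp_le)
  finally show ?thesis .
qed

lemma link_cap_ge:
  assumes C: "finite C" and pos: "\<forall>x\<in>C. 0 < nuh x" and sum1: "sum nuh C = 1"
    and M: "1 \<le> M" "M \<le> card C" and S: "S \<subseteq> C"
  shows "real U * real B * sum nuh S \<le> link_cap C nuh M U B S"
proof -
  define X where "X = (\<Sum>j\<in>{j. j \<subseteq> C \<and> card j = M \<and> j \<inter> S \<noteq> {}}. prod nuh j)"
  define Y where "Y = elem_sym nuh M (C - S)"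
  define e where "e = elem_sym nuh (M - 1) (C - S)"
  define a where "a = sum nuh S"
  define b where "b = sum nuh (C - S)"
  have nonneg: "\<forall>x\<in>C. 0 \<le> nuh x" using pos by (auto intro: less_imp_le)
  have ab: "a + b = 1" using sum.subset_diff[OF S C, of nuh] sum1 by (simp add: a_def b_def)
  have a: "0 \<le> a" and b: "0 \<le> b" using nonneg S by (auto simp: a_def b_def intro!: sum_nonneg)
  \<comment> \<open>\<open>X \<ge> a e\<close> and \<open>Y \<le> b e\<close> with \<open>a + b = 1\<close>: the sets meeting \<open>S\<close> carry at least
     the share \<open>a\<close> of \<open>placement_Z = X + Y\<close>\<close>
  have "a * Y \<le> a * (b * e)" unfolding Y_def b_def e_def
    using nonneg C a by (intro mult_left_mono elem_sym_le_sum_mult M(1)) auto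
  also have "\<dots> = b * (a * e)" by (simp only: mult_ac)
  also have "\<dots> \<le> b * X" unfolding X_def a_def e_def
    using b by (intro mult_left_mono sum_mult_elem_sym_le_meeting[OF C S nonneg M(1)])
  finally have "a * (X + Y) \<le> (a + b) * X" by (simp add: algebra_simps)
  then have aZ: "a * (X + Y) \<le> X" by (simp add: ab)
  have "{j. j \<subseteq> C \<and> card j = M}
      = {j. j \<subseteq> C \<and> card j = M \<and> j \<inter> S \<noteq> {}} \<union> {j. j \<subseteq> C - S \<and> card j = M}"
    by auto
  then have Z: "placement_Z C nuh M = X + Y"
    unfolding placement_Z_def X_def Y_def elem_sym_def
    by (simp only:) (rule sum.union_disjoint; use C in \<open>auto intro: finite_subsets_with\<close>)
  have "link_cap C nuh M U B S = real U * real B * (X / placement_Z C nuh M)"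
    by (simp add: link_cap_def placement_m_def X_def sum_divide_distrib)
  moreover have "a \<le> X / placement_Z C nuh M"
    using aZ placement_Z_pos[OF C pos M(2)] by (simp add: Z pos_le_divide_eq)
  ultimately show ?thesis
    unfolding a_def using mult_left_mono[of "sum nuh S" "X / placement_Z C nuh M" "real U * real B"]
    by simp
qed

lemma link_cap_full:
  assumes "finite C" and "\<forall>x\<in>C. 0 < nuh x" and "1 \<le> M" "M \<le> card C"
  shows "link_cap C nuh M U B C = real U * real B"
proof -
  have "j \<inter> C \<noteq> {}" if "j \<subseteq> C" "card j = M" for j
    using that assms(3) by (auto simp: Int_absorb2)
  then have "{j. j \<subseteq> C \<and> card j = M \<and> j \<inter> C \<noteq> {}} = {j. j \<subseteq> C \<and> card j = M}"
    by blast
  then show ?thesis using placement_Z_pos[OF assms(1,2,4)]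
    by (simp add: link_cap_def placement_m_def sum_divide_distrib[symmetric] placement_Z_def)
qed

section \<open>Product form on coordinate-convex state spaces\<close>

locale coordinate_convex_network =
  fixes C :: "'a set" and F :: "('a \<Rightarrow> nat) set" and \<nu> :: "'a \<Rightarrow> real"
  assumes finite_types: "finite C" and finite_states: "finite F"
    and zero_state: "(\<lambda>_. 0) \<in> F"
    and state_outside: "n \<in> F \<Longrightarrow> c \<notin> C \<Longrightarrow> n c = 0"
    and state_down_closed: "n \<in> F \<Longrightarrow> (\<And>d. m d \<le> n d) \<Longrightarrow> m \<in> F"
    and rate_pos: "c \<in> C \<Longrightarrow> 0 < \<nu> c"
begin

definition outflow :: "('a \<Rightarrow> nat) \<Rightarrow> real" where
  "outflow n = (\<Sum>c\<in>C. if n(c := n c + 1) \<in> F then \<nu> c else 0) + (\<Sum>c\<in>C. real (n c))"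

definition inflow :: "(('a \<Rightarrow> nat) \<Rightarrow> real) \<Rightarrow> ('a \<Rightarrow> nat) \<Rightarrow> real" where
  "inflow \<pi> n = (\<Sum>c\<in>C. if 0 < n c \<and> n(c := n c - 1) \<in> F then \<nu> c * \<pi> (n(c := n c - 1)) else 0)
     + (\<Sum>c\<in>C. if n(c := n c + 1) \<in> F then real (n c + 1) * \<pi> (n(c := n c + 1)) else 0)"

text \<open>The global balance equations of \<open>stationary\<close>, for an arbitrary coordinate-convex \<open>F\<close>.\<close>
definition balanced :: "(('a \<Rightarrow> nat) \<Rightarrow> real) \<Rightarrow> bool" where
  "balanced \<pi> \<longleftrightarrow> (\<forall>n. 0 \<le> \<pi> n) \<and> (\<forall>n. n \<notin> F \<longrightarrow> \<pi> n = 0) \<and> sum \<pi> F = 1 \<and>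
     (\<forall>n\<in>F. \<pi> n * outflow n = inflow \<pi> n)"

definition drift :: "(('a \<Rightarrow> nat) \<Rightarrow> real) \<Rightarrow> ('a \<Rightarrow> nat) \<Rightarrow> real" where
  "drift h n = (\<Sum>c\<in>C. real (n c) * (h (n(c := n c - 1)) - h n))
     + (\<Sum>c\<in>C. if n(c := n c + 1) \<in> F then \<nu> c * (h (n(c := n c + 1)) - h n) else 0)"

definition weight :: "('a \<Rightarrow> nat) \<Rightarrow> real" where
  "weight n = (\<Prod>c\<in>C. \<nu> c ^ n c / fact (n c))"

definition product_form :: "('a \<Rightarrow> nat) \<Rightarrow> real" where
  "product_form n = (if n \<in> F then weight n / sum weight F else 0)"

lemma weight_pos: "0 < weight n"
  unfolding weight_def using rate_pos by (intro prod_pos) auto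

lemma weight_zero: "weight (\<lambda>_. 0) = 1"
  by (simp add: weight_def)

lemma weight_up:
  assumes "c \<in> C"
  shows "weight (n(c := n c + 1)) * real (n c + 1) = \<nu> c * weight n"
proof -
  define r where "r = (\<Prod>d\<in>C - {c}. \<nu> d ^ n d / fact (n d))"
  have "(\<Prod>d\<in>C - {c}. \<nu> d ^ (n(c := n c + 1)) d / fact ((n(c := n c + 1)) d)) = r"
    unfolding r_def by (rule prod.cong) auto
  then have "weight (n(c := n c + 1)) * real (n c + 1)
      = (\<nu> c ^ (n c + 1) / fact (n c + 1) * real (n c + 1)) * r"
    unfolding weight_def prod.remove[OF finite_types assms] by simp
  also have "\<nu> c ^ (n c + 1) / fact (n c + 1) * real (n c + 1) = \<nu> c * (\<nu> c ^ n c / fact (n c))"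
    by (simp add: divide_simps del: of_nat_Suc)
  also have "\<nu> c * (\<nu> c ^ n c / fact (n c)) * r = \<nu> c * weight n"
    unfolding weight_def r_def prod.remove[OF finite_types assms] by simp
  finally show ?thesis .
qed

lemma weight_down:
  assumes "c \<in> C" and "0 < n c"
  shows "\<nu> c * weight (n(c := n c - 1)) = real (n c) * weight n"
proof -
  have "weight n * real (n c) = \<nu> c * weight (n(c := n c - 1))"
    using weight_up[OF assms(1), of "n(c := n c - 1)"] assms(2) by simp
  then show ?thesis by (metis mult.commute)
qed

lemma sum_weight_ge_1: "1 \<le> sum weight F"
  using member_le_sum[OF zero_state, of weight] finite_states weight_pos
  by (simp add: weight_zero less_imp_le)

lemma decrement_in_states: "n \<in> F \<Longrightarrow> n(c := n c - 1) \<in> F"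
  by (erule state_down_closed) simp

lemma inflow_cong: "(\<And>m. m \<in> F \<Longrightarrow> \<pi> m = \<pi>' m) \<Longrightarrow> inflow \<pi> n = inflow \<pi>' n"
  unfolding inflow_def by (intro arg_cong2[where f = "(+)"] sum.cong) auto

text \<open>For \<open>\<pi> = h * weight\<close> the balance defect at \<open>n\<close> is \<open>weight n\<close> times the generator applied
  to \<open>h\<close>; this gives both existence and uniqueness of the balanced measure.\<close>
lemma inflow_minus_outflow:
  assumes n: "n \<in> F"
  shows "inflow (\<lambda>m. h m * weight m) n - h n * weight n * outflow n = weight n * drift h n"
proof -
  have down: "(if 0 < n c \<and> n(c := n c - 1) \<in> F then \<nu> c * (h (n(c := n c - 1)) * weight (n(c := n c - 1))) else 0)
      = weight n * (real (n c) * h (n(c := n c - 1)))" if "c \<in> C" for c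
    using weight_down[OF that] decrement_in_states[OF n] by (cases "0 < n c") (auto simp: algebra_simps)
  have up: "(if n(c := n c + 1) \<in> F then real (n c + 1) * (h (n(c := n c + 1)) * weight (n(c := n c + 1))) else 0)
      = weight n * (if n(c := n c + 1) \<in> F then \<nu> c * h (n(c := n c + 1)) else 0)" if "c \<in> C" for c
  proof (cases "n(c := n c + 1) \<in> F")
    case True
    define m where "m = n(c := n c + 1)"
    have "real (n c + 1) * (h m * weight m) = h m * (weight m * real (n c + 1))"
      by (simp only: ac_simps)
    also have "\<dots> = weight n * (\<nu> c * h m)"
      unfolding m_def weight_up[OF that] by (simp only: ac_simps)
    finally show ?thesis using True by (simp add: m_def)
  qed simp
  define up_ok where "up_ok c \<longleftrightarrow> n(c := n c + 1) \<in> F" for c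
  define A1 where "A1 = (\<Sum>c\<in>C. real (n c) * h (n(c := n c - 1)))"
  define A2 where "A2 = (\<Sum>c\<in>C. if up_ok c then \<nu> c * h (n(c := n c + 1)) else 0)"
  define O1 where "O1 = (\<Sum>c\<in>C. if up_ok c then \<nu> c else 0)"
  define O2 where "O2 = (\<Sum>c\<in>C. real (n c))"
  have e1: "inflow (\<lambda>m. h m * weight m) n = weight n * (A1 + A2)"
    unfolding inflow_def A1_def A2_def distrib_left sum_distrib_left up_ok_def
    by (intro arg_cong2[where f = "(+)"] sum.cong refl) (simp_all only: down up)
  have e2: "(\<Sum>c\<in>C. real (n c) * (h (n(c := n c - 1)) - h n)) = A1 - h n * O2"
    unfolding A1_def O2_def sum_distrib_left sum_subtractf[symmetric]
    by (rule sum.cong) (auto simp: algebra_simps)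
  have e3: "(\<Sum>c\<in>C. if up_ok c then \<nu> c * (h (n(c := n c + 1)) - h n) else 0) = A2 - h n * O1"
    unfolding A2_def O1_def sum_distrib_left sum_subtractf[symmetric]
    by (rule sum.cong) (auto simp: algebra_simps)
  have d: "drift h n = (A1 - h n * O2) + (A2 - h n * O1)"
    unfolding drift_def up_ok_def[symmetric] e2 e3 ..
  have o: "outflow n = O1 + O2"
    unfolding outflow_def up_ok_def[symmetric] O1_def O2_def ..
  show ?thesis unfolding e1 d o by (simp add: algebra_simps)
qed

lemma product_form_nonneg: "0 \<le> product_form n"
  unfolding product_form_def using weight_pos sum_weight_ge_1 by (simp add: less_imp_le)

lemma sum_product_form: "sum product_form F = 1"
proof -
  have "sum product_form F = (\<Sum>n\<in>F. weight n / sum weight F)"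
    by (rule sum.cong) (simp_all add: product_form_def)
  then show ?thesis using sum_weight_ge_1 by (simp add: sum_divide_distrib[symmetric])
qed

lemma product_form_le_weight_ratio:
  assumes "m \<in> F"
  shows "product_form n \<le> weight n / weight m"
proof -
  have "weight m \<le> sum weight F"
    using assms finite_states weight_pos by (intro member_le_sum) (auto intro: less_imp_le)
  then show ?thesis
    using weight_pos[of m] weight_pos[of n] by (simp add: product_form_def frac_le less_imp_le)
qed

lemma drift_const: "drift (\<lambda>_. a) n = 0"
  by (simp add: drift_def cong: if_cong)

lemma product_form_balanced: "balanced product_form"
proof -
  define Z where "Z = sum weight F"
  have pf: "product_form m = (1 / Z) * weight m" if "m \<in> F" for m
    using that by (simp add: product_form_def Z_def)
  have "product_form n * outflow n = inflow product_form n" if n: "n \<in> F" for n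
  proof -
    have "inflow product_form n = inflow (\<lambda>m. (1 / Z) * weight m) n"
      by (rule inflow_cong) (simp add: pf)
    also have "\<dots> = (1 / Z) * weight n * outflow n + weight n * drift (\<lambda>_. 1 / Z) n"
      using inflow_minus_outflow[OF n, of "\<lambda>_. 1 / Z"] by (simp add: algebra_simps)
    also have "drift (\<lambda>_. 1 / Z) n = 0"
      by (rule drift_const)
    finally show ?thesis using pf[OF n] by simp
  qed
  then show ?thesis
    using product_form_nonneg sum_product_form by (auto simp: balanced_def product_form_def)
qed

lemma drift_uminus: "drift (\<lambda>m. - h m) n = - drift h n"
proof -
  have "(\<Sum>c\<in>C. real (n c) * (- h (n(c := n c - 1)) - - h n))
      = - (\<Sum>c\<in>C. real (n c) * (h (n(c := n c - 1)) - h n))"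
    unfolding sum_negf[symmetric] by (rule sum.cong) (auto simp: right_diff_distrib)
  moreover have "(\<Sum>c\<in>C. if n(c := n c + 1) \<in> F then \<nu> c * (- h (n(c := n c + 1)) - - h n) else 0)
      = - (\<Sum>c\<in>C. if n(c := n c + 1) \<in> F then \<nu> c * (h (n(c := n c + 1)) - h n) else 0)"
    unfolding sum_negf[symmetric] by (rule sum.cong) (auto simp: right_diff_distrib)
  ultimately show ?thesis unfolding drift_def by simp
qed

text \<open>Maximum principle: at a maximum of h, every term of the drift is non-positive.\<close>
lemma drift_zero_at_max:
  assumes n: "n \<in> F" and h: "drift h n = 0" and max: "\<forall>m\<in>F. h m \<le> h n"
    and c: "c \<in> C" and pos: "0 < n c"
  shows "h (n(c := n c - 1)) = h n"
proof -
  define t where "t d = real (n d) * (h (n(d := n d - 1)) - h n)" for d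
  define s where "s d = (if n(d := n d + 1) \<in> F then \<nu> d * (h (n(d := n d + 1)) - h n) else 0)" for d
  have t: "t d \<le> 0" for d
    using max decrement_in_states[OF n, of d] by (auto simp: t_def mult_nonneg_nonpos)
  have s: "s d \<le> 0" if "d \<in> C" for d
    using max rate_pos[OF that] by (auto simp: s_def mult_nonneg_nonpos less_imp_le)
  have "sum t C + sum s C = 0" using h by (simp add: drift_def t_def s_def)
  moreover have "sum t C \<le> 0" "sum s C \<le> 0" using t s by (auto intro: sum_nonpos)
  ultimately have "sum t C = 0" by linarith
  then have "\<forall>d\<in>C. - t d = 0"
    using sum_nonneg_eq_0_iff[OF finite_types, of "\<lambda>d. - t d"] t by (simp add: sum_negf)
  then have "t c = 0" using c by simp
  then show ?thesis using pos by (simp add: t_def)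
qed

lemma harmonic_max_attained_at_zero:
  assumes h: "\<forall>m\<in>F. drift h m = 0"
  shows "n \<in> F \<Longrightarrow> \<forall>m\<in>F. h m \<le> h n \<Longrightarrow> h (\<lambda>_. 0) = h n"
proof (induction "sum n C" arbitrary: n rule: less_induct)
  case less
  show ?case
  proof (cases "\<exists>c\<in>C. 0 < n c")
    case False
    have "n = (\<lambda>_. 0)"
    proof
      fix x show "n x = 0" using False state_outside[OF less.prems(1), of x] by (cases "x \<in> C") auto
    qed
    then show ?thesis by simp
  next
    case True
    then obtain c where c: "c \<in> C" "0 < n c" by blast
    let ?m = "n(c := n c - 1)"
    have eq: "h ?m = h n" using drift_zero_at_max[OF less.prems(1) _ less.prems(2) c] h less.prems(1) by blast
    have "sum ?m C < sum n C" by (rule sum_strict_mono_ex1[OF finite_types]) (use c in auto)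
    then have "h (\<lambda>_. 0) = h ?m"
      using less.hyps[OF _ decrement_in_states[OF less.prems(1)]] less.prems(2) eq by simp
    then show ?thesis using eq by simp
  qed
qed

lemma harmonic_const:
  assumes h: "\<forall>m\<in>F. drift h m = 0" and n: "n \<in> F"
  shows "h n = h (\<lambda>_. 0)"
proof -
  have le_zero: "g m \<le> g (\<lambda>_. 0)" if "\<forall>m\<in>F. drift g m = 0" "m \<in> F" for g m
  proof -
    have "Max (g ` F) \<in> g ` F" using finite_states zero_state by (intro Max_in) auto
    then obtain x where "x \<in> F" "g x = Max (g ` F)" by auto
    then have x: "x \<in> F" "\<forall>m\<in>F. g m \<le> g x" using finite_states by simp_all
    then show ?thesis using harmonic_max_attained_at_zero[OF that(1) x] that(2) by simp
  qed
  have "h n \<le> h (\<lambda>_. 0)" by (rule le_zero[OF h n])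
  moreover have "- h n \<le> - h (\<lambda>_. 0)" using h by (intro le_zero[OF _ n]) (simp add: drift_uminus)
  ultimately show ?thesis by linarith
qed

lemma balanced_unique:
  assumes bal: "balanced \<pi>"
  shows "\<pi> = product_form"
proof -
  define h where "h m = \<pi> m / weight m" for m
  have "\<pi> m = h m * weight m" for m
    using weight_pos[of m] by (simp add: h_def)
  then have \<pi>: "\<pi> = (\<lambda>m. h m * weight m)" ..
  have "drift h n = 0" if n: "n \<in> F" for n
  proof -
    have "weight n * drift h n = 0"
      using inflow_minus_outflow[OF n, of h] bal n unfolding \<pi> balanced_def by simp
    then show ?thesis using weight_pos[of n] by simp
  qed
  then have on_F: "\<pi> n = h (\<lambda>_. 0) * weight n" if "n \<in> F" for n
    using harmonic_const[OF _ that, of h] \<pi> by simp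
  have "sum \<pi> F = (\<Sum>n\<in>F. h (\<lambda>_. 0) * weight n)"
    by (rule sum.cong[OF refl on_F])
  then have "1 = (\<Sum>n\<in>F. h (\<lambda>_. 0) * weight n)"
    using bal by (simp add: balanced_def)
  then have h0: "h (\<lambda>_. 0) = 1 / sum weight F"
    using sum_weight_ge_1 by (simp add: sum_distrib_left[symmetric] field_simps)
  show ?thesis
  proof
    fix n show "\<pi> n = product_form n"
      using on_F h0 bal by (cases "n \<in> F") (simp_all add: product_form_def balanced_def)
  qed
qed

lemma throughput_eq_mean_occupancy:
  assumes c: "c \<in> C"
  shows "\<nu> c * (\<Sum>n\<in>{n \<in> F. n(c := n c + 1) \<in> F}. product_form n) = (\<Sum>n\<in>F. real (n c) * product_form n)"
proof -
  define Q where "Q = {n \<in> F. n(c := n c + 1) \<in> F}"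
  define up where "up n = n(c := n c + 1)" for n :: "'a \<Rightarrow> nat"
  have inj: "inj_on up Q"
  proof (rule inj_onI)
    fix x y assume "up x = up y"
    then have "(up x)(c := up x c - 1) = (up y)(c := up y c - 1)" by simp
    then show "x = y" by (simp add: up_def)
  qed
  have img: "{n \<in> F. 0 < n c} = up ` Q"
  proof (intro equalityI subsetI)
    fix n assume n: "n \<in> {n \<in> F. 0 < n c}"
    then have "n(c := n c - 1) \<in> Q" "up (n(c := n c - 1)) = n"
      using decrement_in_states by (auto simp: Q_def up_def)
    then show "n \<in> up ` Q" by (metis image_eqI)
  qed (auto simp: Q_def up_def)
  have step: "real (up m c) * product_form (up m) = \<nu> c * product_form m" if "m \<in> Q" for m
  proof -
    have "real (up m c) * product_form (up m) = weight (m(c := m c + 1)) * real (m c + 1) / sum weight F"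
      using that by (simp add: Q_def up_def product_form_def)
    also have "\<dots> = \<nu> c * product_form m"
      using that unfolding weight_up[OF c] by (simp add: Q_def product_form_def)
    finally show ?thesis .
  qed
  have "(\<Sum>n\<in>F. real (n c) * product_form n) = (\<Sum>n\<in>{n \<in> F. 0 < n c}. real (n c) * product_form n)"
    using finite_states by (intro sum.mono_neutral_right) auto
  also have "\<dots> = (\<Sum>m\<in>Q. \<nu> c * product_form m)"
    by (rule sum.reindex_cong[OF inj img]) (rule step)
  finally show ?thesis by (simp add: Q_def sum_distrib_left)
qed

end

section \<open>The cache network\<close>

locale cache_network =
  fixes C :: "'a set" and nuh :: "'a \<Rightarrow> real" and M U :: nat and \<rho> :: real
  assumes finite_C: "finite C" and nuh_pos: "\<forall>x\<in>C. 0 < nuh x" and sum_nuh: "sum nuh C = 1"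
    and M_ge_1: "1 \<le> M" and U_ge_1: "1 \<le> U" and M_le_card: "M \<le> card C" and load_pos: "0 < \<rho>"
begin

abbreviation states :: "nat \<Rightarrow> ('a \<Rightarrow> nat) set" where
  "states B \<equiv> feasible C nuh M U B"

abbreviation rate :: "nat \<Rightarrow> 'a \<Rightarrow> real" where
  "rate B \<equiv> arr_rate nuh U \<rho> B"

abbreviation cap :: "nat \<Rightarrow> real" where
  "cap B \<equiv> real U * real B"

abbreviation prob :: "nat \<Rightarrow> ('a \<Rightarrow> nat) \<Rightarrow> real" where
  "prob B \<equiv> coordinate_convex_network.product_form C (states B) (rate B)"

abbreviation acc :: "nat \<Rightarrow> 'a \<Rightarrow> real" where
  "acc B d \<equiv> accept_prob C nuh M U \<rho> B d"

lemma nuh_le_1: "d \<in> C \<Longrightarrow> nuh d \<le> 1"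
  using member_le_sum[of d C nuh] finite_C nuh_pos sum_nuh by (auto intro: less_imp_le)

lemma rate_eq: "rate B d = \<rho> * cap B * nuh d"
  by (simp add: arr_rate_def)

lemma cap_mult_sum_le_link_cap: "S \<subseteq> C \<Longrightarrow> cap B * sum nuh S \<le> link_cap C nuh M U B S"
  using link_cap_ge[OF finite_C nuh_pos sum_nuh M_ge_1 M_le_card] by blast

lemma state_total_le:
  assumes "n \<in> states B"
  shows "real (sum n C) \<le> cap B"
proof -
  have "real (sum n C) \<le> link_cap C nuh M U B C" using assms by (simp add: feasible_def)
  then show ?thesis using link_cap_full[OF finite_C nuh_pos M_ge_1 M_le_card] by simp
qed

lemma state_le: "n \<in> states B \<Longrightarrow> real (n d) \<le> cap B"
proof (cases "d \<in> C")
  case True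
  assume n: "n \<in> states B"
  have "n d \<le> sum n C" using True finite_C by (intro member_le_sum) auto
  then show ?thesis using state_total_le[OF n] by linarith
qed (simp add: feasible_def)

lemma states_card_le:
  "finite (states B) \<and> real (card (states B)) \<le> (cap B + 1) ^ card C"
proof -
  define K where "K = nat \<lfloor>cap B\<rfloor>"
  define P where "P = PiE C (\<lambda>_. {0..K})"
  have inj: "inj_on (\<lambda>f. restrict f C) (states B)"
  proof (rule inj_onI)
    fix f g assume f: "f \<in> states B" and g: "g \<in> states B" and e: "restrict f C = restrict g C"
    show "f = g"
    proof
      fix x show "f x = g x"
        using f g e[THEN fun_cong, of x] by (cases "x \<in> C") (auto simp: feasible_def)
    qed
  qed
  have sub: "(\<lambda>f. restrict f C) ` states B \<subseteq> P"
    using state_le by (auto simp: P_def K_def le_nat_floor)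
  have fin: "finite P" unfolding P_def using finite_C by (intro finite_PiE) auto
  have "card (states B) \<le> card P" by (rule card_inj_on_le[OF inj sub fin])
  moreover have "card P = (K + 1) ^ card C" unfolding P_def using finite_C by (simp add: card_PiE)
  ultimately have "real (card (states B)) \<le> (real K + 1) ^ card C"
    by (metis of_nat_1 of_nat_add of_nat_le_iff of_nat_power)
  also have "\<dots> \<le> (cap B + 1) ^ card C"
    using of_nat_floor[of "cap B"] by (intro power_mono) (simp_all add: K_def)
  finally have "real (card (states B)) \<le> (cap B + 1) ^ card C" .
  then show ?thesis using finite_imageD[OF finite_subset[OF sub fin] inj] by blast
qed

lemma coordinate_convex_states: "1 \<le> B \<Longrightarrow> coordinate_convex_network C (states B) (rate B)"
proof
  show "finite (states B)" using states_card_le by blast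
  have "0 \<le> link_cap C nuh M U B S" if "S \<subseteq> C" for S
  proof -
    have "0 \<le> nuh x" if "x \<in> S" for x using that \<open>S \<subseteq> C\<close> nuh_pos by (auto intro: less_imp_le)
    then have "0 \<le> cap B * sum nuh S" by (simp add: sum_nonneg)
    then show ?thesis using cap_mult_sum_le_link_cap[OF that, of B] by linarith
  qed
  then show "(\<lambda>_. 0) \<in> states B" by (simp add: feasible_def)
  show "n c = 0" if "n \<in> states B" "c \<notin> C" for n c using that by (simp add: feasible_def)
  show "m \<in> states B" if n: "n \<in> states B" and le: "\<And>d. m d \<le> n d" for n m
  proof -
    have "m c = 0" if "c \<notin> C" for c using le[of c] n that by (simp add: feasible_def)
    moreover have "(\<Sum>x\<in>S. real (m x)) \<le> link_cap C nuh M U B S" if "S \<subseteq> C" for S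
    proof -
      have "(\<Sum>x\<in>S. real (m x)) \<le> (\<Sum>x\<in>S. real (n x))" using le by (intro sum_mono) simp
      also have "\<dots> \<le> link_cap C nuh M U B S" using n that by (simp add: feasible_def)
      finally show ?thesis .
    qed
    ultimately show ?thesis by (simp add: feasible_def)
  qed
  show "0 < rate B c" if "1 \<le> B" "c \<in> C" for c
    using that nuh_pos load_pos U_ge_1 by (simp add: rate_eq)
qed (use finite_C in simp_all)

lemma accept_prob_eq:
  assumes "1 \<le> B"
  shows "acc B c = (\<Sum>n\<in>{n \<in> states B. n(c := n c + 1) \<in> states B}. prob B n)"
proof -
  interpret coordinate_convex_network C "states B" "rate B" by (rule coordinate_convex_states[OF assms])
  have "stationary C nuh M U \<rho> B = balanced"
    by (intro ext) (simp only: stationary_def balanced_def inflow_def outflow_def Let_def)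
  moreover have "(THE \<pi>. balanced \<pi>) = product_form"
    using product_form_balanced balanced_unique by (rule the_equality)
  ultimately show ?thesis by (simp add: accept_prob_def Let_def)
qed

lemma rate_mult_accept_prob:
  assumes "1 \<le> B" and "c \<in> C"
  shows "rate B c * acc B c = (\<Sum>n\<in>states B. real (n c) * prob B n)"
  using coordinate_convex_network.throughput_eq_mean_occupancy[OF
      coordinate_convex_states[OF assms(1)] assms(2)]
  by (simp add: accept_prob_eq[OF assms(1)])

lemma accept_prob_bounds:
  assumes "1 \<le> B"
  shows "0 \<le> acc B c" "acc B c \<le> 1"
proof -
  interpret coordinate_convex_network C "states B" "rate B" by (rule coordinate_convex_states[OF assms])
  show "0 \<le> acc B c"
    by (simp add: accept_prob_eq[OF assms] sum_nonneg product_form_nonneg)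
  have "acc B c \<le> sum product_form (states B)" unfolding accept_prob_eq[OF assms]
    by (rule sum_mono2) (auto simp: finite_states product_form_nonneg)
  then show "acc B c \<le> 1" by (simp add: sum_product_form)
qed

text \<open>The mean total occupancy cannot exceed the capacity \<open>U B\<close> of the whole catalogue.\<close>
lemma weighted_accept_prob_le:
  assumes B: "1 \<le> B"
  shows "(\<Sum>d\<in>C. nuh d * acc B d) \<le> 1 / \<rho>"
proof -
  interpret coordinate_convex_network C "states B" "rate B" by (rule coordinate_convex_states[OF B])
  have "(\<Sum>d\<in>C. rate B d * acc B d) = (\<Sum>d\<in>C. \<Sum>n\<in>states B. real (n d) * product_form n)"
    by (simp add: rate_mult_accept_prob[OF B])
  also have "\<dots> = (\<Sum>n\<in>states B. product_form n * real (sum n C))"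
    by (subst sum.swap) (simp add: sum_distrib_right mult.commute)
  also have "\<dots> \<le> (\<Sum>n\<in>states B. product_form n * cap B)"
    by (intro sum_mono mult_left_mono state_total_le product_form_nonneg)
  also have "\<dots> = cap B" by (simp add: sum_distrib_right[symmetric] sum_product_form)
  finally have "cap B * ((\<Sum>d\<in>C. nuh d * acc B d) * \<rho>) \<le> cap B * 1"
    by (simp add: rate_eq sum_distrib_left mult_ac)
  moreover have "0 < cap B" using B U_ge_1 by simp
  ultimately have "(\<Sum>d\<in>C. nuh d * acc B d) * \<rho> \<le> 1" by (rule mult_left_le_imp_le)
  then show ?thesis using load_pos by (simp add: pos_le_divide_eq)
qed

subsection \<open>Concentration around the fluid state\<close>

abbreviation wt :: "nat \<Rightarrow> ('a \<Rightarrow> nat) \<Rightarrow> real" where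
  "wt B \<equiv> coordinate_convex_network.weight C (rate B)"

definition fluid :: "nat \<Rightarrow> 'a \<Rightarrow> real" where
  "fluid B d = min \<rho> 1 * cap B * nuh d"

definition fluid_state :: "nat \<Rightarrow> 'a \<Rightarrow> nat" where
  "fluid_state B d = (if d \<in> C then nat \<lfloor>fluid B d\<rfloor> else 0)"

lemma fluid_nonneg: "d \<in> C \<Longrightarrow> 0 \<le> fluid B d"
  using nuh_pos load_pos by (simp add: fluid_def less_imp_le)

lemma fluid_state_bounds:
  assumes "d \<in> C"
  shows "real (fluid_state B d) \<le> fluid B d" "fluid B d - 1 < real (fluid_state B d)"
  using fluid_nonneg[OF assms] assms by (simp_all add: fluid_state_def)

lemma rate_eq_fluid: "rate B d = max \<rho> 1 * fluid B d"
proof -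
  have "\<rho> = max \<rho> 1 * min \<rho> 1" by (simp add: max_def min_def)
  then show ?thesis by (simp add: rate_eq fluid_def mult_ac)
qed

lemma fluid_state_feasible: "fluid_state B \<in> states B"
proof -
  have "real (\<Sum>c\<in>S. fluid_state B c) \<le> link_cap C nuh M U B S" if S: "S \<subseteq> C" for S
  proof -
    have "real (\<Sum>c\<in>S. fluid_state B c) \<le> (\<Sum>c\<in>S. fluid B c)"
      using S fluid_state_bounds by (auto intro: sum_mono)
    also have "\<dots> = min \<rho> 1 * (cap B * sum nuh S)"
      by (simp add: fluid_def sum_distrib_left mult_ac)
    also have "\<dots> \<le> cap B * sum nuh S"
      using S nuh_pos load_pos by (intro mult_left_le_one_le mult_nonneg_nonneg sum_nonneg)
        (auto intro: less_imp_le)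
    also have "\<dots> \<le> link_cap C nuh M U B S" by (rule cap_mult_sum_le_link_cap[OF S])
    finally show ?thesis .
  qed
  then show ?thesis by (simp add: feasible_def fluid_state_def del: of_nat_sum)
qed

lemma fluid_eventually_ge: "d \<in> C \<Longrightarrow> eventually (\<lambda>B. A \<le> fluid B d) sequentially"
proof -
  assume d: "d \<in> C"
  have "filterlim (\<lambda>B. (min \<rho> 1 * real U * nuh d) * real B) at_top sequentially"
    using d nuh_pos load_pos U_ge_1
    by (intro filterlim_tendsto_pos_mult_at_top[OF tendsto_const _ filterlim_real_sequentially]) auto
  then show ?thesis by (simp add: filterlim_at_top fluid_def mult_ac)
qed

lemma ln_weight:
  assumes "1 \<le> B"
  shows "ln (wt B n) = (\<Sum>d\<in>C. real (n d) * ln (rate B d) - ln (fact (n d)))"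
proof -
  interpret coordinate_convex_network C "states B" "rate B" by (rule coordinate_convex_states[OF assms])
  have "rate B d ^ n d / fact (n d) \<noteq> 0" if "d \<in> C" for d
    using rate_pos[OF that] by simp
  then have "ln (weight n) = (\<Sum>d\<in>C. ln (rate B d ^ n d / fact (n d)))"
    unfolding weight_def by (rule ln_prod[OF finite_C])
  also have "\<dots> = (\<Sum>d\<in>C. real (n d) * ln (rate B d) - ln (fact (n d)))"
  proof (rule sum.cong[OF refl])
    fix d assume "d \<in> C"
    then show "ln (rate B d ^ n d / fact (n d)) = real (n d) * ln (rate B d) - ln (fact (n d))"
      using rate_pos by (simp add: ln_divide_pos ln_realpow)
  qed
  finally show ?thesis .
qed

definition slack :: real where
  "slack = card C * ln (max \<rho> 1) + (\<Sum>d\<in>C. 2 / (min \<rho> 1 * nuh d)) + card C"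

lemma ln_weight_gain_le:
  assumes B: "1 \<le> B" and d: "d \<in> C" and big: "2 \<le> fluid B d" and n: "n \<in> states B"
  defines "t \<equiv> real (n d)" and "s \<equiv> real (fluid_state B d)"
  shows "t * ln (rate B d) - ln (fact (n d)) - (s * ln (rate B d) - ln (fact (fluid_state B d)))
    \<le> ln (max \<rho> 1) * (t - s) + 2 / (min \<rho> 1 * nuh d) - entropy_gap t s + ln (cap B) + 1"
proof -
  define a where "a = fluid B d"
  have sa: "s \<le> a" "a - 1 < s" using fluid_state_bounds[OF d] by (simp_all add: s_def a_def)
  then have s1: "1 \<le> fluid_state B d" and s2: "a / 2 \<le> s" using big by (simp_all add: s_def a_def)
  have spos: "0 < s" "0 < a" using s1 sa by (simp_all add: s_def)
  have t: "0 \<le> t" "t \<le> cap B" using state_le[OF n] by (simp_all add: t_def)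
  have "(ln a - ln s) * (t - s) \<le> (ln a - ln s) * t"
    using sa spos by (intro mult_left_mono) auto
  also have "\<dots> \<le> ((a - s) / s) * cap B"
    using ln_diff_le_div[of s a] spos sa t by (intro mult_mono) auto
  also have "\<dots> \<le> (1 / s) * cap B"
    using sa spos t by (intro mult_right_mono divide_right_mono) auto
  also have "\<dots> \<le> (2 / a) * cap B"
    using s2 spos t by (intro mult_right_mono) (auto simp: field_simps)
  also have "\<dots> = 2 / (min \<rho> 1 * nuh d)"
    using spos B U_ge_1 by (simp add: a_def fluid_def field_simps)
  finally have gain: "(ln a - ln s) * (t - s) \<le> 2 / (min \<rho> 1 * nuh d)" .
  have "min \<rho> 1 * nuh d \<le> 1"
    using nuh_le_1[OF d] nuh_pos d load_pos by (intro mult_le_one) auto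
  from mult_right_mono[OF this, of "cap B"] have "a \<le> cap B" by (simp add: a_def fluid_def mult_ac)
  then have "ln s \<le> ln (cap B)" using sa spos by simp
  moreover have "ln (rate B d) = ln (max \<rho> 1) + ln a"
    using spos by (simp add: rate_eq_fluid a_def ln_mult)
  moreover have "t * ln t - t \<le> ln (fact (n d))" unfolding t_def by (rule ln_fact_ge)
  moreover have "ln (fact (fluid_state B d)) \<le> (s + 1) * ln s - s + 1"
    unfolding s_def by (rule ln_fact_le[OF s1])
  ultimately show ?thesis using gain by (simp add: entropy_gap_def algebra_simps)
qed

lemma ln_weight_ratio_le:
  assumes B: "1 \<le> B" and big: "\<forall>d\<in>C. 2 \<le> fluid B d" and n: "n \<in> states B"
  shows "ln (wt B n) - ln (wt B (fluid_state B))
    \<le> slack + card C * ln (cap B) - (\<Sum>d\<in>C. entropy_gap (real (n d)) (real (fluid_state B d)))"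
proof -
  define t where "t d = real (n d)" for d
  define s where "s d = real (fluid_state B d)" for d
  have drift: "ln (max \<rho> 1) * (\<Sum>d\<in>C. t d - s d) \<le> card C * ln (max \<rho> 1)"
  proof (cases "\<rho> \<le> 1")
    case False
    then have "(\<Sum>d\<in>C. fluid B d) = cap B" by (simp add: fluid_def sum_distrib_left[symmetric] sum_nuh)
    moreover have "(\<Sum>d\<in>C. fluid B d - 1) \<le> (\<Sum>d\<in>C. s d)"
      using fluid_state_bounds by (intro sum_mono) (auto simp: s_def less_imp_le)
    moreover have "(\<Sum>d\<in>C. t d) \<le> cap B" using state_total_le[OF n] by (simp add: t_def)
    ultimately have "(\<Sum>d\<in>C. t d - s d) \<le> card C" by (simp add: sum_subtractf)
    then show ?thesis using False by (simp add: mult.commute)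
  qed simp
  have "ln (wt B n) - ln (wt B (fluid_state B))
      = (\<Sum>d\<in>C. t d * ln (rate B d) - ln (fact (n d)) - (s d * ln (rate B d) - ln (fact (fluid_state B d))))"
    by (simp add: ln_weight[OF B] sum_subtractf t_def s_def)
  also have "\<dots> \<le> (\<Sum>d\<in>C. ln (max \<rho> 1) * (t d - s d) + 2 / (min \<rho> 1 * nuh d)
      - entropy_gap (t d) (s d) + ln (cap B) + 1)"
    using ln_weight_gain_le[OF B _ _ n] big by (intro sum_mono) (simp add: t_def s_def)
  also have "\<dots> = ln (max \<rho> 1) * (\<Sum>d\<in>C. t d - s d) + (\<Sum>d\<in>C. 2 / (min \<rho> 1 * nuh d))
      - (\<Sum>d\<in>C. entropy_gap (t d) (s d)) + card C * (ln (cap B) + 1)"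
    by (simp add: sum.distrib sum_subtractf sum_distrib_left right_diff_distrib distrib_left)
  also have "\<dots> \<le> slack + card C * ln (cap B) - (\<Sum>d\<in>C. entropy_gap (t d) (s d))"
    using drift by (simp add: slack_def algebra_simps)
  finally show ?thesis by (simp add: t_def s_def)
qed

definition decay :: "real \<Rightarrow> 'a \<Rightarrow> real" where
  "decay \<theta> c = (1 - sqrt ((1 + \<theta>) / 2))\<^sup>2 * min \<rho> 1 * nuh c / 2"

definition low_occupancy :: "real \<Rightarrow> nat \<Rightarrow> 'a \<Rightarrow> real" where
  "low_occupancy \<theta> B c = (\<Sum>n\<in>{n \<in> states B. real (n c) \<le> \<theta> * fluid B c}. prob B n)"

lemma decay_pos: "c \<in> C \<Longrightarrow> \<theta> < 1 \<Longrightarrow> 0 < decay \<theta> c"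
  using nuh_pos load_pos by (simp add: decay_def)

lemma decay_le_entropy_gap:
  assumes B: "1 \<le> B" and c: "c \<in> C" and \<theta>: "0 < \<theta>" "\<theta> < 1"
    and big: "2 \<le> fluid B c" "(1 + \<theta>) / (1 - \<theta>) \<le> fluid B c"
    and low: "real (n c) \<le> \<theta> * fluid B c"
  shows "decay \<theta> c * cap B \<le> entropy_gap (real (n c)) (real (fluid_state B c))"
proof -
  define a where "a = fluid B c"
  define s where "s = real (fluid_state B c)"
  define q where "q = (1 + \<theta>) / 2"
  have sa: "a - 1 < s" using fluid_state_bounds[OF c] by (simp add: a_def s_def)
  have "1 + \<theta> \<le> a * (1 - \<theta>)" using big(2) \<theta> by (simp add: a_def pos_divide_le_eq)
  then have "\<theta> * a \<le> q * (a - 1)" by (simp add: q_def algebra_simps)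
  also have "\<dots> \<le> q * s" using sa \<theta> by (intro mult_left_mono) (auto simp: q_def)
  finally have "real (n c) \<le> q * s" using low by (simp add: a_def)
  moreover have "a / 2 \<le> s" "0 < s" "0 \<le> q" "q \<le> 1" using sa big \<theta> by (simp_all add: a_def q_def)
  ultimately have "(1 - sqrt q)\<^sup>2 * s \<le> entropy_gap (real (n c)) s"
    by (intro entropy_gap_ge_of_le) auto
  moreover have "(1 - sqrt q)\<^sup>2 * (a / 2) \<le> (1 - sqrt q)\<^sup>2 * s"
    using \<open>a / 2 \<le> s\<close> by (rule mult_left_mono) simp
  moreover have "decay \<theta> c * cap B = (1 - sqrt q)\<^sup>2 * (a / 2)"
    by (simp add: decay_def q_def a_def fluid_def)
  ultimately show ?thesis by (simp add: s_def)
qed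

lemma prob_low_occupancy_le:
  assumes B: "1 \<le> B" and c: "c \<in> C" and \<theta>: "0 < \<theta>" "\<theta> < 1"
    and big: "\<forall>d\<in>C. 2 \<le> fluid B d" "(1 + \<theta>) / (1 - \<theta>) \<le> fluid B c"
    and n: "n \<in> states B" and low: "real (n c) \<le> \<theta> * fluid B c"
  shows "prob B n \<le> exp (slack + card C * ln (cap B) - decay \<theta> c * cap B)"
proof -
  interpret coordinate_convex_network C "states B" "rate B" by (rule coordinate_convex_states[OF B])
  define gap where "gap d = entropy_gap (real (n d)) (real (fluid_state B d))" for d
  have "0 \<le> gap d" if d: "d \<in> C" for d
  proof -
    have "1 < real (fluid_state B d)"
      using fluid_state_bounds(2)[OF d, of B] bspec[OF big(1) d] by linarith
    then show ?thesis
      using entropy_gap_ge_sqrt[of "real (n d)" "real (fluid_state B d)"] zero_le_power2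
      unfolding gap_def by (meson of_nat_0_le_iff order_trans zero_less_one less_trans)
  qed
  then have "gap c \<le> sum gap C" using c finite_C by (intro member_le_sum) auto
  moreover have "decay \<theta> c * cap B \<le> gap c"
    unfolding gap_def by (rule decay_le_entropy_gap[where n = n, OF B c \<theta> bspec[OF big(1) c] big(2) low])
  ultimately have "ln (weight n) - ln (weight (fluid_state B))
      \<le> slack + card C * ln (cap B) - decay \<theta> c * cap B"
    using ln_weight_ratio_le[OF B big(1) n] by (simp add: gap_def)
  have "product_form n \<le> weight n / weight (fluid_state B)"
    by (rule product_form_le_weight_ratio[OF fluid_state_feasible])
  also have "\<dots> = exp (ln (weight n) - ln (weight (fluid_state B)))"
    using weight_pos by (simp add: exp_diff)
  also have "\<dots> \<le> exp (slack + card C * ln (cap B) - decay \<theta> c * cap B)"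
    using \<open>ln (weight n) - _ \<le> _\<close> by simp
  finally show ?thesis .
qed

lemma cap_tendsto_at_top: "filterlim cap at_top sequentially"
  using U_ge_1
  by (intro filterlim_tendsto_pos_mult_at_top[OF tendsto_const _ filterlim_real_sequentially]) auto

lemma low_occupancy_tendsto_0:
  assumes c: "c \<in> C" and \<theta>: "0 < \<theta>" "\<theta> < 1"
  shows "(\<lambda>B. low_occupancy \<theta> B c) \<longlonglongrightarrow> 0"
proof -
  define \<eta> where "\<eta> = decay \<theta> c"
  define g where "g B = exp slack * ((cap B + 1) ^ (2 * card C) * exp (- \<eta> * cap B))" for B
  have "0 < \<eta>" using decay_pos[OF c \<theta>(2)] by (simp add: \<eta>_def)
  have "((\<lambda>x. (x + 1) ^ (2 * card C) * exp (- \<eta> * x)) \<longlongrightarrow> 0) at_top"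
    using \<open>0 < \<eta>\<close> by real_asymp
  then have "g \<longlonglongrightarrow> exp slack * 0"
    unfolding g_def by (intro tendsto_mult tendsto_const filterlim_compose[OF _ cap_tendsto_at_top])
  then have lim: "g \<longlonglongrightarrow> 0" by simp
  have lower: "eventually (\<lambda>B. 0 \<le> low_occupancy \<theta> B c) sequentially"
    using eventually_ge_at_top[of 1]
  proof eventually_elim
    case (elim B)
    interpret coordinate_convex_network C "states B" "rate B" by (rule coordinate_convex_states[OF elim])
    show ?case unfolding low_occupancy_def by (intro sum_nonneg product_form_nonneg)
  qed
  have "eventually (\<lambda>B. 1 \<le> B \<and> (\<forall>d\<in>C. 2 \<le> fluid B d) \<and> (1 + \<theta>) / (1 - \<theta>) \<le> fluid B c) sequentially"
    using finite_C c
    by (intro eventually_conj eventually_ge_at_top eventually_ball_finite ballI fluid_eventually_ge)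
  then have upper: "eventually (\<lambda>B. low_occupancy \<theta> B c \<le> g B) sequentially"
  proof eventually_elim
    case (elim B)
    then have B: "1 \<le> B" by simp
    then have "1 \<le> U * B" using U_ge_1 by simp
    then have cap: "1 \<le> cap B" by (metis of_nat_1 of_nat_le_iff of_nat_mult)
    define E where "E = exp (slack + card C * ln (cap B) - \<eta> * cap B)"
    have "low_occupancy \<theta> B c \<le> (\<Sum>n\<in>{n \<in> states B. real (n c) \<le> \<theta> * fluid B c}. E)"
      unfolding low_occupancy_def E_def \<eta>_def using prob_low_occupancy_le[OF B c \<theta>] elim
      by (intro sum_mono) auto
    also have "\<dots> = real (card {n \<in> states B. real (n c) \<le> \<theta> * fluid B c}) * E"
      by simp
    also have "\<dots> \<le> real (card (states B)) * E"
      using states_card_le by (intro mult_right_mono) (auto simp: E_def intro: card_mono)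
    also have "\<dots> \<le> (cap B + 1) ^ card C * E"
      using states_card_le by (intro mult_right_mono) (auto simp: E_def)
    also have "E = exp slack * (cap B ^ card C * exp (- \<eta> * cap B))"
    proof -
      have "exp (card C * ln (cap B)) = cap B ^ card C" using cap by (simp add: exp_of_nat_mult)
      then show ?thesis unfolding E_def diff_conv_add_uminus exp_add by simp
    qed
    also have "(cap B + 1) ^ card C * \<dots> \<le> g B"
    proof -
      have "cap B ^ card C \<le> (cap B + 1) ^ card C" using cap by (intro power_mono) auto
      then have "(cap B + 1) ^ card C * cap B ^ card C \<le> (cap B + 1) ^ (2 * card C)"
        by (simp add: mult_2 power_add mult_left_mono)
      then show ?thesis unfolding g_def by (simp only: mult_ac) (simp add: mult_left_mono)
    qed
    finally show ?case .
  qed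
  show ?thesis by (rule tendsto_sandwich[OF lower upper tendsto_const lim])
qed

lemma mean_occupancy_ge:
  assumes B: "1 \<le> B" and "0 \<le> \<theta>"
  shows "\<theta> * fluid B c * (1 - low_occupancy \<theta> B c) \<le> (\<Sum>n\<in>states B. real (n c) * prob B n)"
proof -
  interpret coordinate_convex_network C "states B" "rate B" by (rule coordinate_convex_states[OF B])
  define low where "low = {n \<in> states B. real (n c) \<le> \<theta> * fluid B c}"
  have "sum product_form (states B) = sum product_form (states B - low) + sum product_form low"
    using finite_states by (intro sum.subset_diff) (auto simp: low_def)
  then have "1 - low_occupancy \<theta> B c = sum product_form (states B - low)"
    by (simp add: low_occupancy_def low_def[symmetric] sum_product_form)
  then have "\<theta> * fluid B c * (1 - low_occupancy \<theta> B c) = (\<Sum>n\<in>states B - low. \<theta> * fluid B c * product_form n)"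
    by (simp add: sum_distrib_left)
  also have "\<dots> \<le> (\<Sum>n\<in>states B - low. real (n c) * product_form n)"
    by (intro sum_mono mult_right_mono product_form_nonneg) (auto simp: low_def)
  also have "\<dots> \<le> (\<Sum>n\<in>states B. real (n c) * product_form n)"
    using finite_states by (intro sum_mono2) (auto intro: mult_nonneg_nonneg product_form_nonneg)
  finally show ?thesis .
qed

lemma accept_prob_ge:
  assumes B: "1 \<le> B" and d: "d \<in> C" and \<theta>: "0 \<le> \<theta>"
  shows "\<theta> * min 1 (1 / \<rho>) * (1 - low_occupancy \<theta> B d) \<le> acc B d"
proof -
  have rate: "0 < rate B d" using coordinate_convex_network.rate_pos[OF coordinate_convex_states[OF B] d] .
  have "fluid B d = min 1 (1 / \<rho>) * rate B d"
    using load_pos by (simp add: rate_eq fluid_def min_def field_simps)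
  then have "rate B d * (\<theta> * min 1 (1 / \<rho>) * (1 - low_occupancy \<theta> B d)) \<le> rate B d * acc B d"
    using mean_occupancy_ge[OF B \<theta>, of d] rate_mult_accept_prob[OF B d] by (simp add: mult_ac)
  then show ?thesis using rate by simp
qed

lemma accept_prob_eventually_ge:
  assumes "\<theta> < 1"
  shows "eventually (\<lambda>B. \<forall>d\<in>C. \<theta> * min 1 (1 / \<rho>) \<le> acc B d) sequentially"
proof (cases "\<theta> \<le> 0")
  case True
  then have nonpos: "\<theta> * min 1 (1 / \<rho>) \<le> 0" using load_pos by (simp add: mult_nonpos_nonneg)
  show ?thesis using eventually_ge_at_top[of 1]
  proof eventually_elim
    case (elim B)
    show ?case using accept_prob_bounds(1)[OF elim] nonpos by (auto intro: order_trans)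
  qed
next
  case False
  define t where "t = sqrt \<theta>"
  have t: "0 < t" "t < 1" "t * t = \<theta>" using False assms by (auto simp: t_def)
  have "eventually (\<lambda>B. \<forall>d\<in>C. low_occupancy t B d < 1 - t) sequentially"
    using finite_C t by (intro eventually_ball_finite ballI order_tendstoD(2)[OF low_occupancy_tendsto_0]) auto
  then show ?thesis using eventually_ge_at_top[of 1]
  proof eventually_elim
    case (elim B)
    show ?case
    proof
      fix d assume d: "d \<in> C"
      have "t \<le> 1 - low_occupancy t B d" using elim d by fastforce
      moreover have "0 \<le> t * min 1 (1 / \<rho>)" using t load_pos by simp
      ultimately have "t * min 1 (1 / \<rho>) * t \<le> t * min 1 (1 / \<rho>) * (1 - low_occupancy t B d)"
        by (rule mult_left_mono)
      then have "\<theta> * min 1 (1 / \<rho>) \<le> t * min 1 (1 / \<rho>) * (1 - low_occupancy t B d)"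
        by (simp add: mult_ac flip: t(3))
      also have "\<dots> \<le> acc B d" using accept_prob_ge[OF elim(2) d] t by simp
      finally show "\<theta> * min 1 (1 / \<rho>) \<le> acc B d" .
    qed
  qed
qed

lemma accept_prob_eventually_le:
  assumes c: "c \<in> C" and \<theta>: "\<theta> < 1"
  defines "m \<equiv> min 1 (1 / \<rho>)"
  shows "eventually (\<lambda>B. acc B c \<le> m + (1 - \<theta>) * (m * (1 - nuh c) / nuh c)) sequentially"
proof (cases "\<rho> \<le> 1")
  case True
  have "0 \<le> (1 - \<theta>) * (m * (1 - nuh c) / nuh c)"
    using \<theta> c nuh_pos nuh_le_1[OF c] load_pos
    by (intro mult_nonneg_nonneg divide_nonneg_pos) (auto simp: m_def)
  moreover have "m = 1" using True load_pos by (simp add: m_def)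
  ultimately have one: "1 \<le> m + (1 - \<theta>) * (m * (1 - nuh c) / nuh c)" by simp
  show ?thesis using eventually_ge_at_top[of 1]
  proof eventually_elim
    case (elim B)
    show ?case using accept_prob_bounds(2)[OF elim, of c] one by linarith
  qed
next
  case False
  then have m: "m = 1 / \<rho>" by (simp add: m_def)
  show ?thesis using accept_prob_eventually_ge[OF \<theta>] eventually_ge_at_top[of 1]
  proof eventually_elim
    case (elim B)
    have "sum nuh (C - {c}) = 1 - nuh c" using sum.remove[OF finite_C c, of nuh] sum_nuh by simp
    then have "(1 - nuh c) * (\<theta> * m) = (\<Sum>d\<in>C - {c}. nuh d * (\<theta> * m))"
      by (simp add: sum_distrib_right[symmetric])
    also have "\<dots> \<le> (\<Sum>d\<in>C - {c}. nuh d * acc B d)"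
      using elim nuh_pos by (intro sum_mono mult_left_mono) (auto simp: m_def less_imp_le)
    finally have "nuh c * acc B c \<le> m - (1 - nuh c) * (\<theta> * m)"
      using weighted_accept_prob_le[OF elim(2)] sum.remove[OF finite_C c, of "\<lambda>d. nuh d * acc B d"] m
      by linarith
    also have "\<dots> = nuh c * (m + (1 - \<theta>) * (m * (1 - nuh c) / nuh c))"
      using bspec[OF nuh_pos c] by (simp add: field_simps)
    finally show ?case using mult_le_cancel_left_pos[OF bspec[OF nuh_pos c]] by blast
  qed
qed

end


theorem theorem1:
  fixes C :: "'a set" and nuh :: "'a \<Rightarrow> real" and M U :: nat and \<rho> :: real and c :: 'a
  assumes "finite C"
    and "\<forall>x\<in>C. nuh x > 0"
    and "(\<Sum>x\<in>C. nuh x) = 1"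
    and "1 \<le> M" and "1 \<le> U" and "M \<le> card C"
    and "\<rho> > 0"
    and "c \<in> C"
  shows "(\<lambda>B. accept_prob C nuh M U \<rho> B c) \<longlonglongrightarrow> min 1 (1 / \<rho>)"
proof -
  interpret cache_network C nuh M U \<rho> using assms by unfold_locales auto
  let ?m = "min 1 (1 / \<rho>)" and ?K = "min 1 (1 / \<rho>) * (1 - nuh c) / nuh c"
  show ?thesis
  proof (rule tendsto_from_bounds_at_left)
    show "((\<lambda>\<theta>. \<theta> * ?m) \<longlongrightarrow> ?m) (at_left 1)"
      by (auto intro!: tendsto_eq_intros)
    show "((\<lambda>\<theta>. ?m + (1 - \<theta>) * ?K) \<longlongrightarrow> ?m) (at_left 1)"
      using assms(2,8) by (auto intro!: tendsto_eq_intros)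
    fix \<theta> :: real assume \<theta>: "\<theta> < 1"
    have "eventually (\<lambda>B. \<theta> * ?m \<le> acc B c) sequentially"
      using accept_prob_eventually_ge[OF \<theta>] assms(8) by (auto elim: eventually_mono)
    moreover have "eventually (\<lambda>B. acc B c \<le> ?m + (1 - \<theta>) * ?K) sequentially"
      by (rule accept_prob_eventually_le[OF assms(8) \<theta>])
    ultimately show "eventually (\<lambda>B. \<theta> * ?m \<le> acc B c \<and> acc B c \<le> ?m + (1 - \<theta>) * ?K) sequentially"
      by (rule eventually_conj)
  qed
qed

end
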